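(* Fix an integer $k\ge1$ and $p\in(0,1)$. Let $T_{k+1}$ be the number of $k$-simplices of $X(n,p)$ that are critical for the lexicographical matching. Then there exist a constant $C_{p,k}>0$ and an integer $N_{p,k}$, both independent of $n$, such that for all $n\ge N_{p,k}$, \[ \mathrm{Var}(T_{k+1})\ge C_{p,k}\,n^{2k}. \]
   Context: $G(n,p)$ is the random graph on $[n]$ where each of the $\binom n2$ edges is present independently with probability $p$; write $Y_{i,j}=Y_{j,i}$ for the edge indicator of $\{i,j\}$. $X(n,p)$ is the clique complex of $G\sim G(n,p)$: its simplices are the nonempty vertex sets spanning cliques in $G$; a $k$-simplex has $k+1$ vertices. Lexicographical matching on a simplicial complex $\mathcal{L}$: for $s\in\mathcal{L}$ let $I_{\mathcal{L}}(s)=\{j: j<\min(s),\ s\cup\{j\}\in\mathcal{L}\}$; whenever nonempty, pair $s$ with $s\cup\{\min I_{\mathcal{L}}(s)\}$. A simplex is critical if it is in no pair. Explicitly, with $C_{k+1}$ the set of $(k+1)$-subsets of $[n]$ and $s_-=s\setminus\{\min s\}$, \[ T_{k+1}=\sum_{s\in C_{k+1}}\prod_{i\ne j\in s}Y_{i,j}\Bigl[\prod_{i=1}^{\min(s)-1}\Bigl(1-\prod_{j\in s}Y_{i,j}\Bigr)-\prod_{i=1}^{\min(s)-1}\Bigl(1-\prod_{j\in s_-}Y_{i,j}\Bigr)\Bigr]. \] *)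

theory Defs
  imports "HOL-Probability.Probability"
begin

definition edge_set :: "nat \<Rightarrow> nat set set" where
  "edge_set n = {e. \<exists>i j. i \<in> {1..n} \<and> j \<in> {1..n} \<and> i \<noteq> j \<and> e = {i, j}}"

definition Gnp :: "nat \<Rightarrow> real \<Rightarrow> (nat set \<Rightarrow> bool) pmf" where
  "Gnp n p = Pi_pmf (edge_set n) False (\<lambda>_. bernoulli_pmf p)"

definition clique_complex :: "nat \<Rightarrow> (nat set \<Rightarrow> bool) \<Rightarrow> nat set set" where
  "clique_complex n Y = {s. s \<noteq> {} \<and> s \<subseteq> {1..n} \<and> (\<forall>i\<in>s. \<forall>j\<in>s. i \<noteq> j \<longrightarrow> Y {i, j})}"

definition lex_I :: "nat set set \<Rightarrow> nat set \<Rightarrow> nat set" where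
  "lex_I L s = {j. j < Min s \<and> insert j s \<in> L}"

definition lex_pairs :: "nat set set \<Rightarrow> (nat set \<times> nat set) set" where
  "lex_pairs L = {(s, insert (Min (lex_I L s)) s) | s. s \<in> L \<and> lex_I L s \<noteq> {}}"

definition lex_critical :: "nat set set \<Rightarrow> nat set \<Rightarrow> bool" where
  "lex_critical L s = (s \<in> L \<and> (\<forall>(a, b) \<in> lex_pairs L. s \<noteq> a \<and> s \<noteq> b))"

definition T_crit :: "nat \<Rightarrow> nat \<Rightarrow> (nat set \<Rightarrow> bool) \<Rightarrow> nat" where
  "T_crit n k Y = card {s \<in> clique_complex n Y. card s = k + 1 \<and> lex_critical (clique_complex n Y) s}"

end

theory Submission
  imports Defs
begin

text \<open>Split \<open>G(n,p)\<close> into the edge \<open>{1,2}\<close> and the remaining edges.  Conditioning on the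
  remaining edges gives \<open>Var T \<ge> p(1-p) \<delta>^2\<close>, where \<open>\<delta>\<close> is the expected drop of \<open>T\<close> when the
  edge \<open>{1,2}\<close> is switched on.  A simplex that is critical with the edge stays critical without
  it unless it contains both \<open>1\<close> and \<open>2\<close>, which at most \<open>n^(k-1)\<close> simplices do.  On the other hand, for every \<open>k\<close>-set \<open>s' \<subseteq> {3..n}\<close>
  such that \<open>{1,2} \<union> s'\<close> spans a clique up to the edge \<open>{1,2}\<close>, the simplex \<open>{2} \<union> s'\<close> is critical
  without the edge (no vertex below \<open>2\<close> extends it, but \<open>1\<close> replaces its minimum) and matched
  with \<open>{1,2} \<union> s'\<close> with it.  Each of the \<open>C(n-2,k)\<close> candidates succeeds with probability at
  least \<open>p^((k+2)^2)\<close>, so \<open>\<delta>\<close> is of order \<open>n^k\<close>.\<close>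

lemma integral_pair_pmf_finite:
  fixes f :: "'a \<times> 'b \<Rightarrow> real"
  assumes fin_A: "finite (set_pmf A)" and fin_B: "finite (set_pmf B)"
  shows "(\<integral>x. f x \<partial>pair_pmf A B) = (\<integral>a. (\<integral>b. f (a, b) \<partial>B) \<partial>A)"
proof -
  have "(\<integral>x. f x \<partial>pair_pmf A B) = (\<Sum>x\<in>set_pmf A \<times> set_pmf B. f x * pmf (pair_pmf A B) x)"
    by (rule integral_measure_pmf_real) (use fin_A fin_B in \<open>auto simp: set_pmf_iff pmf_pair\<close>)
  also have "\<dots> = (\<Sum>a\<in>set_pmf A. \<Sum>b\<in>set_pmf B. f (a, b) * pmf B b * pmf A a)"
    by (subst sum.cartesian_product) (auto simp: pmf_pair intro!: sum.cong)
  also have "\<dots> = (\<Sum>a\<in>set_pmf A. (\<Sum>b\<in>set_pmf B. f (a, b) * pmf B b) * pmf A a)"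
    by (simp add: sum_distrib_right)
  also have "\<dots> = (\<Sum>a\<in>set_pmf A. (\<integral>b. f (a, b) \<partial>B) * pmf A a)"
    using integral_measure_pmf_real[OF fin_B] by (auto simp: set_pmf_iff intro!: sum.cong)
  also have "\<dots> = (\<integral>a. (\<integral>b. f (a, b) \<partial>B) \<partial>A)"
    by (rule integral_measure_pmf_real[OF fin_A, symmetric]) (simp add: set_pmf_iff)
  finally show ?thesis .
qed

lemma (in prob_space) square_expectation_diff_le:
  fixes g :: "'a \<Rightarrow> real"
  assumes "integrable M g" and "integrable M (\<lambda>x. (g x)\<^sup>2)"
  shows "(expectation g - c)\<^sup>2 \<le> expectation (\<lambda>x. (g x - c)\<^sup>2)"
proof -
  have "expectation (\<lambda>x. (g x - c)\<^sup>2) = variance g + (expectation g - c)\<^sup>2"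
    using assms by (simp add: power2_diff power2_eq_square prob_space algebra_simps)
  then show ?thesis using variance_positive[of g] by linarith
qed

lemma variance_pair_bernoulli_pmf_ge:
  fixes X :: "bool \<times> 'a \<Rightarrow> real"
  assumes fin_M: "finite (set_pmf M)" and q: "0 \<le> q" "q \<le> 1"
  shows "q * (1 - q) * ((\<integral>y. X (True, y) \<partial>M) - (\<integral>y. X (False, y) \<partial>M))\<^sup>2
           \<le> measure_pmf.variance (pair_pmf (bernoulli_pmf q) M) X"
proof -
  have fin_B: "finite (set_pmf (bernoulli_pmf q))" by simp
  have int: "\<And>h :: 'a \<Rightarrow> real. integrable M h" by (rule integrable_measure_pmf_finite[OF fin_M])
  define a1 where "a1 = (\<integral>y. X (True, y) \<partial>M)"
  define a0 where "a0 = (\<integral>y. X (False, y) \<partial>M)"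
  define \<mu> where "\<mu> = a1 * q + a0 * (1 - q)"
  have mean: "(\<integral>x. X x \<partial>pair_pmf (bernoulli_pmf q) M) = \<mu>"
    by (simp add: integral_pair_pmf_finite[OF fin_B fin_M] q a0_def a1_def \<mu>_def)
  have "(a1 - \<mu>)\<^sup>2 * q + (a0 - \<mu>)\<^sup>2 * (1 - q)
      \<le> (\<integral>y. (X (True, y) - \<mu>)\<^sup>2 \<partial>M) * q + (\<integral>y. (X (False, y) - \<mu>)\<^sup>2 \<partial>M) * (1 - q)"
    using measure_pmf.square_expectation_diff_le[OF int int, of _ \<mu>] q
    unfolding a0_def a1_def by (intro add_mono mult_right_mono) auto
  also have "\<dots> = measure_pmf.variance (pair_pmf (bernoulli_pmf q) M) X"
    unfolding mean by (simp add: integral_pair_pmf_finite[OF fin_B fin_M] q)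
  finally show ?thesis
    unfolding \<mu>_def a0_def[symmetric] a1_def[symmetric] by (simp add: power2_eq_square algebra_simps)
qed

lemma finite_set_pmf_Pi_pmf_bernoulli:
  "finite A \<Longrightarrow> finite (set_pmf (Pi_pmf A False (\<lambda>_. bernoulli_pmf p)))"
  by (subst set_Pi_pmf) auto

lemma prob_Pi_pmf_bernoulli_all_ge:
  fixes p :: real
  assumes A: "finite A" and F: "F \<subseteq> A" and p: "0 \<le> p" "p \<le> 1"
  shows "p ^ card F \<le> measure_pmf.prob (Pi_pmf A False (\<lambda>_. bernoulli_pmf p)) {f. \<forall>x\<in>F. f x}"
proof -
  let ?B = "\<lambda>x. if x \<in> F then {True} else UNIV"
  have "p ^ card F = (\<Prod>x\<in>A. if x \<in> F then p else 1)"
    using F A by (simp add: prod.If_cases Int_absorb1)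
  also have "\<dots> = (\<Prod>x\<in>A. measure_pmf.prob (bernoulli_pmf p) (?B x))"
    by (intro prod.cong) (auto simp: measure_pmf_single p)
  also have "\<dots> = measure_pmf.prob (Pi_pmf A False (\<lambda>_. bernoulli_pmf p)) (PiE_dflt A False ?B)"
    by (rule measure_Pi_pmf_PiE_dflt[OF A, symmetric])
  also have "\<dots> \<le> measure_pmf.prob (Pi_pmf A False (\<lambda>_. bernoulli_pmf p)) {f. \<forall>x\<in>F. f x}"
    using F by (intro measure_pmf.finite_measure_mono) (auto simp: PiE_dflt_def)
  finally show ?thesis .
qed

definition abstract_simplicial_complex :: "nat set set \<Rightarrow> bool" where
  "abstract_simplicial_complex L \<longleftrightarrow>
     (\<forall>s\<in>L. finite s \<and> s \<noteq> {} \<and> (\<forall>t. t \<subseteq> s \<longrightarrow> t \<noteq> {} \<longrightarrow> t \<in> L))"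

lemma abstract_simplicial_complexD:
  assumes "abstract_simplicial_complex L" and "s \<in> L"
  shows "finite s" and "s \<noteq> {}" and "\<And>t. t \<subseteq> s \<Longrightarrow> t \<noteq> {} \<Longrightarrow> t \<in> L"
  using assms unfolding abstract_simplicial_complex_def by blast+

lemma abstract_simplicial_complex_clique_complex:
  "abstract_simplicial_complex (clique_complex n Y)"
  unfolding abstract_simplicial_complex_def clique_complex_def
  by (auto intro: finite_subset)

lemma finite_lex_I: "finite (lex_I L s)"
  unfolding lex_I_def by (rule finite_subset[of _ "{..<Min s}"]) auto

lemma lex_I_mono: "L \<subseteq> L' \<Longrightarrow> lex_I L s \<subseteq> lex_I L' s"
  unfolding lex_I_def by auto

lemma Min_less_Diff_Min:
  fixes s :: "'a :: linorder set"
  shows "finite s \<Longrightarrow> x \<in> s - {Min s} \<Longrightarrow> Min s < x"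
  using Min_le[of s x] by (auto simp: less_le)

lemma lex_matched_upwards_iff:
  "(\<exists>b. (s, b) \<in> lex_pairs L) \<longleftrightarrow> s \<in> L \<and> lex_I L s \<noteq> {}"
  unfolding lex_pairs_def by auto

text \<open>The only possible lower partner of \<open>s\<close> is \<open>s - {Min s}\<close>.\<close>
lemma lex_matched_downwards_iff:
  assumes L: "abstract_simplicial_complex L" and s: "s \<in> L" "2 \<le> card s"
  shows "(\<exists>a. (a, s) \<in> lex_pairs L) \<longleftrightarrow> \<not> (\<exists>j<Min s. insert j (s - {Min s}) \<in> L)"
proof
  assume "\<exists>a. (a, s) \<in> lex_pairs L"
  then obtain a where a: "a \<in> L" "lex_I L a \<noteq> {}" and s_eq: "s = insert (Min (lex_I L a)) a"
    unfolding lex_pairs_def by blast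
  let ?r = "Min (lex_I L a)"
  have "?r \<in> lex_I L a" using a(2) finite_lex_I by simp
  then have r: "?r < Min a" unfolding lex_I_def by simp
  have "finite a" "a \<noteq> {}" using abstract_simplicial_complexD[OF L a(1)] by auto
  then have "Min s = ?r" "s - {Min s} = a" using r s_eq by auto
  show "\<not> (\<exists>j<Min s. insert j (s - {Min s}) \<in> L)"
  proof
    assume "\<exists>j<Min s. insert j (s - {Min s}) \<in> L"
    then obtain j where j: "j < Min s" "insert j (s - {Min s}) \<in> L" by blast
    then have "j \<in> lex_I L a"
      unfolding lex_I_def using \<open>Min s = ?r\<close> \<open>s - {Min s} = a\<close> r by simp
    then have "?r \<le> j" by (rule Min_le[OF finite_lex_I])
    then show False using j(1) \<open>Min s = ?r\<close> by simp
  qed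
next
  assume none_below: "\<not> (\<exists>j<Min s. insert j (s - {Min s}) \<in> L)"
  let ?t = "s - {Min s}"
  have fin: "finite s" and "s \<noteq> {}" using abstract_simplicial_complexD[OF L s(1)] by auto
  then have s_eq: "insert (Min s) ?t = s" using Min_in by blast
  have "?t \<noteq> {}"
  proof
    assume "?t = {}"
    then have "card s \<le> card {Min s}" using fin by (intro card_mono) auto
    then show False using s(2) by simp
  qed
  then have "?t \<in> L" by (intro abstract_simplicial_complexD(3)[OF L s(1)]) auto
  have "Min s < Min ?t" using Min_less_Diff_Min[OF fin Min_in[OF _ \<open>?t \<noteq> {}\<close>]] fin by simp
  then have min_I: "Min s \<in> lex_I L ?t" unfolding lex_I_def mem_Collect_eq s_eq using s(1) by blast
  have min_eq: "Min (lex_I L ?t) = Min s"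
  proof (rule antisym)
    show "Min (lex_I L ?t) \<le> Min s" by (rule Min_le[OF finite_lex_I min_I])
    have "lex_I L ?t \<noteq> {}" using min_I by blast
    then have "insert (Min (lex_I L ?t)) ?t \<in> L"
      using Min_in[OF finite_lex_I] unfolding lex_I_def by blast
    then show "Min s \<le> Min (lex_I L ?t)" using none_below by (metis not_le)
  qed
  have "(?t, insert (Min (lex_I L ?t)) ?t) \<in> lex_pairs L"
    unfolding lex_pairs_def using \<open>?t \<in> L\<close> min_I by blast
  then show "\<exists>a. (a, s) \<in> lex_pairs L"
    unfolding min_eq s_eq ..
qed

lemma lex_critical_iff:
  assumes "abstract_simplicial_complex L" and "s \<in> L" and "2 \<le> card s"
  shows "lex_critical L s \<longleftrightarrow> lex_I L s = {} \<and> (\<exists>j<Min s. insert j (s - {Min s}) \<in> L)"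
proof -
  have "lex_critical L s \<longleftrightarrow> \<not> (\<exists>b. (s, b) \<in> lex_pairs L) \<and> \<not> (\<exists>a. (a, s) \<in> lex_pairs L)"
    using assms(2) unfolding lex_critical_def by auto
  then show ?thesis
    using assms(2) lex_matched_upwards_iff[of s L] lex_matched_downwards_iff[OF assms] by blast
qed

definition clique_edges :: "nat set \<Rightarrow> nat set set" where
  "clique_edges V = {{i, j} | i j. i \<in> V \<and> j \<in> V \<and> i \<noteq> j}"

lemma mem_clique_complex_iff:
  "V \<in> clique_complex n Y \<longleftrightarrow> V \<noteq> {} \<and> V \<subseteq> {1..n} \<and> (\<forall>x\<in>clique_edges V. Y x)"
  unfolding clique_complex_def clique_edges_def by blast

lemma clique_edges_subset_edge_set: "V \<subseteq> {1..n} \<Longrightarrow> clique_edges V \<subseteq> edge_set n"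
  unfolding clique_edges_def edge_set_def by blast

lemma card_clique_edges_le:
  assumes "finite V"
  shows "card (clique_edges V) \<le> card V ^ 2"
proof -
  have "clique_edges V \<subseteq> (\<lambda>(i, j). {i, j}) ` (V \<times> V)"
    unfolding clique_edges_def by auto
  then have "card (clique_edges V) \<le> card (V \<times> V)"
    using assms by (meson card_image_le card_mono finite_SigmaI finite_imageI order_trans)
  then show ?thesis by (simp add: card_cartesian_product power2_eq_square)
qed

lemma clique_complex_fun_upd_edge_iff:
  assumes "\<not> {a, b} \<subseteq> V"
  shows "V \<in> clique_complex n (Y({a, b} := x)) \<longleftrightarrow> V \<in> clique_complex n Y"
proof -
  have "{i, j} \<noteq> {a, b}" if "i \<in> V" "j \<in> V" for i j
  proof
    assume "{i, j} = {a, b}"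
    then have "{a, b} \<subseteq> V" using that by (simp flip: \<open>{i, j} = {a, b}\<close>)
    then show False using assms by contradiction
  qed
  then show ?thesis unfolding clique_complex_def by auto
qed

lemma not_edge_subset_clique_complex_del:
  assumes "V \<in> clique_complex n (Y({a, b} := False))" and "a \<noteq> b"
  shows "\<not> {a, b} \<subseteq> V"
proof
  assume "{a, b} \<subseteq> V"
  moreover have "\<forall>i\<in>V. \<forall>j\<in>V. i \<noteq> j \<longrightarrow> (Y({a, b} := False)) {i, j}"
    using assms(1) unfolding clique_complex_def by (simp del: fun_upd_apply)
  ultimately have "(Y({a, b} := False)) {a, b}" using assms(2) by blast
  then show False by simp
qed

lemma clique_complex_del_subset_add:
  "clique_complex n (Y(e := False)) \<subseteq> clique_complex n (Y(e := True))"
  unfolding clique_complex_def by auto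

lemma lex_critical_delete_edge12:
  assumes crit: "lex_critical (clique_complex n (Y({1, 2} := True))) s"
    and card_s: "2 \<le> card s" and not_12: "\<not> {1, 2} \<subseteq> s"
  shows "lex_critical (clique_complex n (Y({1, 2} := False))) s"
proof -
  let ?L1 = "clique_complex n (Y({1, 2} := True))"
  let ?L0 = "clique_complex n (Y({1, 2} := False))"
  have same: "\<And>V. \<not> {1, 2} \<subseteq> V \<Longrightarrow> V \<in> ?L0 \<longleftrightarrow> V \<in> ?L1"
    using clique_complex_fun_upd_edge_iff by blast
  have "s \<in> ?L1" using crit unfolding lex_critical_def by blast
  then have s_L0: "s \<in> ?L0" using same[OF not_12] by simp
  obtain j where I1: "lex_I ?L1 s = {}" and j: "j < Min s" "insert j (s - {Min s}) \<in> ?L1"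
    using crit lex_critical_iff[OF abstract_simplicial_complex_clique_complex \<open>s \<in> ?L1\<close> card_s] by blast
  have "lex_I ?L0 s = {}" using lex_I_mono[OF clique_complex_del_subset_add] I1 by blast
  have "finite s" using \<open>s \<in> ?L1\<close> abstract_simplicial_complexD[OF abstract_simplicial_complex_clique_complex] by blast
  have "1 \<le> j" using j(2) unfolding clique_complex_def by auto
  then have gt_2: "\<forall>x \<in> s - {Min s}. 2 < x" using Min_less_Diff_Min[OF \<open>finite s\<close>] j(1) by fastforce
  have no_12: "\<not> {1, 2} \<subseteq> insert j t" if "\<forall>x\<in>t. 2 < x" for t :: "nat set"
    using that by force
  have "insert j (s - {Min s}) \<in> ?L0" using same[OF no_12[OF gt_2]] j(2) by simp
  then show ?thesis
    using lex_critical_iff[OF abstract_simplicial_complex_clique_complex s_L0 card_s]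
      \<open>lex_I ?L0 s = {}\<close> j(1) by blast
qed

lemma lex_critical_edge12_witness:
  assumes s': "s' \<subseteq> {3..n}" "s' \<noteq> {}"
    and clique: "insert 1 (insert 2 s') \<in> clique_complex n (Y({1, 2} := True))"
  shows "lex_critical (clique_complex n (Y({1, 2} := False))) (insert 2 s')"
    and "\<not> lex_critical (clique_complex n (Y({1, 2} := True))) (insert 2 s')"
proof -
  let ?L1 = "clique_complex n (Y({1, 2} := True))"
  let ?L0 = "clique_complex n (Y({1, 2} := False))"
  let ?s = "insert 2 s'"
  have same: "\<And>V. \<not> {1, 2} \<subseteq> V \<Longrightarrow> V \<in> ?L0 \<longleftrightarrow> V \<in> ?L1"
    using clique_complex_fun_upd_edge_iff by blast
  have sub: "\<And>V. V \<subseteq> insert 1 (insert 2 s') \<Longrightarrow> V \<noteq> {} \<Longrightarrow> V \<in> ?L1"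
    using abstract_simplicial_complexD(3)[OF abstract_simplicial_complex_clique_complex clique] .
  have "1 \<notin> s'" "2 \<notin> s'" using s'(1) by auto
  have "finite s'" by (rule finite_subset[OF s'(1)]) simp
  have card_s: "2 \<le> card ?s"
    using \<open>2 \<notin> s'\<close> \<open>finite s'\<close> s'(2) by (simp add: Suc_le_eq card_gt_0_iff)
  have min_s: "Min ?s = 2" using s'(1) \<open>finite s'\<close> by (auto intro!: Min_eqI)
  have s_L1: "?s \<in> ?L1" by (rule sub) auto
  then have s_L0: "?s \<in> ?L0" using same[of ?s] \<open>1 \<notin> s'\<close> by simp
  have "lex_I ?L0 ?s = {}"
  proof -
    have "j \<notin> lex_I ?L0 ?s" for j
    proof
      assume "j \<in> lex_I ?L0 ?s"
      then have "j < 2" and j_L0: "insert j ?s \<in> ?L0" unfolding lex_I_def min_s by auto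
      moreover have "1 \<le> j" using j_L0 unfolding clique_complex_def by auto
      ultimately have "{1, 2} \<subseteq> insert j ?s" by auto
      then show False using not_edge_subset_clique_complex_del[OF j_L0] by simp
    qed
    then show ?thesis by blast
  qed
  moreover have "insert 1 (?s - {Min ?s}) \<in> ?L0"
    using same[of "insert 1 s'"] sub[of "insert 1 s'"] min_s \<open>2 \<notin> s'\<close> by auto
  ultimately show "lex_critical ?L0 ?s"
    using lex_critical_iff[OF abstract_simplicial_complex_clique_complex s_L0 card_s] min_s by auto
  have "1 \<in> lex_I ?L1 ?s" unfolding lex_I_def min_s using clique by simp
  then show "\<not> lex_critical ?L1 ?s"
    using lex_critical_iff[OF abstract_simplicial_complex_clique_complex s_L1 card_s] by auto
qed

definition edge12_witnesses :: "nat \<Rightarrow> nat \<Rightarrow> (nat set \<Rightarrow> bool) \<Rightarrow> nat set set" where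
  "edge12_witnesses n k Y =
     {s'. s' \<subseteq> {3..n} \<and> card s' = k \<and> insert 1 (insert 2 s') \<in> clique_complex n (Y({1, 2} := True))}"

lemma card_supersets_le:
  assumes "finite A"
  shows "card {s. s \<subseteq> A \<and> B \<subseteq> s \<and> card s = card B + m} \<le> card A ^ m"
proof -
  let ?S = "{s. s \<subseteq> A \<and> B \<subseteq> s \<and> card s = card B + m}"
  have "card ?S \<le> card {t. t \<subseteq> A \<and> card t = m}"
  proof (rule card_inj_on_le[where f = "\<lambda>s. s - B"])
    show "inj_on (\<lambda>s. s - B) ?S"
      by (rule inj_onI) (metis (no_types, lifting) Diff_partition mem_Collect_eq)
    show "(\<lambda>s. s - B) ` ?S \<subseteq> {t. t \<subseteq> A \<and> card t = m}"
    proof clarify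
      fix s assume s: "s \<subseteq> A" "B \<subseteq> s" "card s = card B + m"
      then have "finite B" using assms by (meson finite_subset)
      then show "s - B \<subseteq> A \<and> card (s - B) = m"
        using s by (auto simp: card_Diff_subset)
    qed
  qed (use assms in simp)
  also have "\<dots> = card A choose m" by (rule n_subsets[OF assms])
  also have "\<dots> \<le> card A ^ m"
    by (cases "m \<le> card A") (simp_all add: binomial_le_pow binomial_eq_0)
  finally show ?thesis .
qed

lemma T_crit_delete_edge12_ge:
  assumes k: "1 \<le> k"
  shows "T_crit n k (Y({1, 2} := True)) + card (edge12_witnesses n k Y)
           \<le> T_crit n k (Y({1, 2} := False)) + card {s. s \<subseteq> {1..n} \<and> {1, 2} \<subseteq> s \<and> card s = k + 1}"
proof -
  define C where "C b = {s \<in> clique_complex n (Y({1, 2} := b)). card s = k + 1 \<and>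
                            lex_critical (clique_complex n (Y({1, 2} := b))) s}" for b
  define D where "D = {s. s \<subseteq> {1..n} \<and> {1, 2} \<subseteq> s \<and> card s = k + 1}"
  let ?W = "edge12_witnesses n k Y"
  have fin_C: "finite (C b)" for b
    by (rule finite_subset[of _ "Pow {1..n}"]) (auto simp: C_def clique_complex_def)
  have fin_D: "finite D" by (rule finite_subset[of _ "Pow {1..n}"]) (auto simp: D_def)
  have fin_W: "finite ?W"
    by (rule finite_subset[of _ "Pow {3..n}"]) (auto simp: edge12_witnesses_def)
  have "C True - D \<subseteq> C False"
  proof
    fix s assume s: "s \<in> C True - D"
    then have "s \<subseteq> {1..n}" "card s = k + 1" unfolding C_def clique_complex_def by auto
    with s have "\<not> {1, 2} \<subseteq> s" unfolding D_def by blast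
    then show "s \<in> C False"
      using s lex_critical_delete_edge12[of n Y s] k
      unfolding C_def lex_critical_def by auto
  qed
  moreover have "insert 2 s' \<in> C False - C True" if "s' \<in> ?W" for s'
  proof -
    have s': "s' \<subseteq> {3..n}" "card s' = k"
      and clique: "insert 1 (insert 2 s') \<in> clique_complex n (Y({1, 2} := True))"
      using that unfolding edge12_witnesses_def by auto
    have "s' \<noteq> {}" using s'(2) k by auto
    moreover have "finite s'" by (rule finite_subset[OF s'(1)]) simp
    moreover have "2 \<notin> s'" using s'(1) by auto
    ultimately show ?thesis
      using lex_critical_edge12_witness[OF s'(1) \<open>s' \<noteq> {}\<close> clique] s'(2)
      unfolding C_def lex_critical_def by auto
  qed
  ultimately have sub: "(C True - D) \<union> insert 2 ` ?W \<subseteq> C False"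
    and disj: "(C True - D) \<inter> insert 2 ` ?W = {}"
    by auto
  have "inj_on (insert 2) ?W"
  proof (rule inj_onI)
    fix a b assume "a \<in> ?W" "b \<in> ?W" "insert 2 a = insert 2 b"
    moreover have "2 \<notin> a" "2 \<notin> b" using calculation(1,2) unfolding edge12_witnesses_def by auto
    ultimately show "a = b" by (metis insert_ident)
  qed
  then have "card (C True - D) + card ?W = card ((C True - D) \<union> insert 2 ` ?W)"
    using card_Un_disjoint[OF _ _ disj] fin_C fin_W by (simp add: card_image)
  also have "\<dots> \<le> card (C False)" by (rule card_mono[OF fin_C sub])
  finally have "card (C True - D) + card ?W \<le> card (C False)" .
  moreover have "card (C True) - card D \<le> card (C True - D)" by (rule diff_card_le_card_Diff[OF fin_D])
  ultimately show ?thesis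
    unfolding T_crit_def C_def[symmetric] D_def[symmetric] by linarith
qed

lemma finite_edge_set: "finite (edge_set n)"
  by (rule finite_subset[of _ "Pow {1..n}"]) (auto simp: edge_set_def)

lemma prob_clique_complex_add_edge_ge:
  fixes p :: real
  assumes V: "V \<subseteq> {1..n}" "V \<noteq> {}" and p: "0 \<le> p" "p \<le> 1"
  shows "p ^ (card V ^ 2)
           \<le> measure_pmf.prob (Pi_pmf (edge_set n - {e}) False (\<lambda>_. bernoulli_pmf p))
                {f. V \<in> clique_complex n (f(e := True))}"
proof -
  let ?F = "clique_edges V - {e}"
  have "finite V" using V(1) by (rule finite_subset) simp
  have "card ?F \<le> card V ^ 2"
    using card_clique_edges_le[OF \<open>finite V\<close>] card_Diff1_le[of "clique_edges V" e] by linarith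
  then have "p ^ (card V ^ 2) \<le> p ^ card ?F" by (rule power_decreasing) (use p in auto)
  also have "\<dots> \<le> measure_pmf.prob (Pi_pmf (edge_set n - {e}) False (\<lambda>_. bernoulli_pmf p)) {f. \<forall>x\<in>?F. f x}"
    using clique_edges_subset_edge_set[OF V(1)] finite_edge_set p
    by (intro prob_Pi_pmf_bernoulli_all_ge) auto
  also have "\<dots> \<le> measure_pmf.prob (Pi_pmf (edge_set n - {e}) False (\<lambda>_. bernoulli_pmf p))
                   {f. V \<in> clique_complex n (f(e := True))}"
    using V by (intro measure_pmf.finite_measure_mono) (auto simp: mem_clique_complex_iff)
  finally show ?thesis .
qed

lemma expectation_card_edge12_witnesses_ge:
  fixes p :: real
  assumes n: "2 \<le> n" and p: "0 \<le> p" "p \<le> 1"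
  defines "M \<equiv> Pi_pmf (edge_set n - {{1, 2}}) False (\<lambda>_. bernoulli_pmf p)"
  shows "real (n - 2 choose k) * p ^ ((k + 2)^2) \<le> (\<integral>f. real (card (edge12_witnesses n k f)) \<partial>M)"
proof -
  let ?S = "{s'. s' \<subseteq> {3..n} \<and> card s' = k}"
  let ?E = "\<lambda>s'. {f. insert 1 (insert 2 s') \<in> clique_complex n (f({1, 2} := True))}"
  have fin_S: "finite ?S" by (rule finite_subset[of _ "Pow {3..n}"]) auto
  have fin_M: "finite (set_pmf M)"
    unfolding M_def by (rule finite_set_pmf_Pi_pmf_bernoulli) (simp add: finite_edge_set)
  have "card ?S = n - 2 choose k" using n_subsets[of "{3..n}" k] by simp
  then have "real (n - 2 choose k) * p ^ ((k + 2)^2) = (\<Sum>s'\<in>?S. p ^ ((k + 2)^2))" by simp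
  also have "\<dots> \<le> (\<Sum>s'\<in>?S. measure_pmf.prob M (?E s'))"
  proof (rule sum_mono)
    fix s' assume s': "s' \<in> ?S"
    then have "finite s'" by (intro finite_subset[of s' "{3..n}"]) auto
    moreover have "1 \<notin> s'" "2 \<notin> s'" using s' by auto
    ultimately have card_V: "card (insert 1 (insert 2 s')) = k + 2" using s' by simp
    have "insert 1 (insert 2 s') \<subseteq> {1..n}" using s' n by auto
    then have "p ^ (card (insert 1 (insert 2 s')) ^ 2) \<le> measure_pmf.prob M (?E s')"
      unfolding M_def by (rule prob_clique_complex_add_edge_ge[OF _ _ p]) simp
    then show "p ^ ((k + 2)^2) \<le> measure_pmf.prob M (?E s')" by (simp only: card_V)
  qed
  also have "\<dots> = (\<integral>f. (\<Sum>s'\<in>?S. indicator (?E s') f) \<partial>M)"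
    by (subst Bochner_Integration.integral_sum) (simp_all add: integrable_measure_pmf_finite[OF fin_M])
  also have "\<dots> = (\<integral>f. real (card (edge12_witnesses n k f)) \<partial>M)"
  proof (rule Bochner_Integration.integral_cong[OF refl])
    fix f
    have "edge12_witnesses n k f = {s'\<in>?S. f \<in> ?E s'}" unfolding edge12_witnesses_def by blast
    then show "(\<Sum>s'\<in>?S. indicator (?E s') f) = real (card (edge12_witnesses n k f))"
      using fin_S by (simp add: indicator_def sum.If_cases Int_def)
  qed
  finally show ?thesis .
qed

lemma Gnp_eq_pair_pmf_edge:
  assumes "e \<in> edge_set n"
  shows "Gnp n p = map_pmf (\<lambda>(y, f). f(e := y))
           (pair_pmf (bernoulli_pmf p) (Pi_pmf (edge_set n - {e}) False (\<lambda>_. bernoulli_pmf p)))"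
proof -
  have "edge_set n = insert e (edge_set n - {e})" using assms by blast
  then show ?thesis
    unfolding Gnp_def by (metis Pi_pmf_insert finite_Diff finite_edge_set Diff_iff singletonI)
qed

lemma variance_Gnp_ge_edge_effect:
  fixes T :: "(nat set \<Rightarrow> bool) \<Rightarrow> real"
  assumes e: "e \<in> edge_set n" and p: "0 \<le> p" "p \<le> 1"
  defines "M \<equiv> Pi_pmf (edge_set n - {e}) False (\<lambda>_. bernoulli_pmf p)"
  shows "p * (1 - p) * ((\<integral>f. T (f(e := True)) \<partial>M) - (\<integral>f. T (f(e := False)) \<partial>M))\<^sup>2
           \<le> measure_pmf.variance (Gnp n p) T"
proof -
  have fin_M: "finite (set_pmf M)"
    unfolding M_def by (rule finite_set_pmf_Pi_pmf_bernoulli) (simp add: finite_edge_set)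
  show ?thesis
    using variance_pair_bernoulli_pmf_ge[OF fin_M p, of "\<lambda>x. T ((snd x)(e := fst x))"]
    unfolding Gnp_eq_pair_pmf_edge[OF e] M_def by (simp add: case_prod_beta)
qed

lemma expectation_T_crit_delete_edge12_ge:
  fixes p :: real
  assumes k: "1 \<le> k" and n: "2 \<le> n" and p: "0 \<le> p" "p \<le> 1"
  defines "M \<equiv> Pi_pmf (edge_set n - {{1, 2}}) False (\<lambda>_. bernoulli_pmf p)"
  shows "real (n - 2 choose k) * p ^ ((k + 2)^2) - real n ^ (k - 1)
           \<le> (\<integral>f. real (T_crit n k (f({1, 2} := False))) \<partial>M)
             - (\<integral>f. real (T_crit n k (f({1, 2} := True))) \<partial>M)"
proof -
  define D where "D = {s. s \<subseteq> {1..n} \<and> {1, 2} \<subseteq> s \<and> card s = k + 1}"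
  have int: "integrable M h" for h :: "(nat set \<Rightarrow> bool) \<Rightarrow> real"
    unfolding M_def
    by (intro integrable_measure_pmf_finite finite_set_pmf_Pi_pmf_bernoulli) (simp add: finite_edge_set)
  have "card D \<le> card {1..n} ^ (k - 1)"
    using card_supersets_le[of "{1..n}" "{1, 2}" "k - 1"] k unfolding D_def by simp
  then have card_D: "real (card D) \<le> real n ^ (k - 1)" by (simp flip: of_nat_power)
  have "real (n - 2 choose k) * p ^ ((k + 2)^2) - real n ^ (k - 1)
          \<le> (\<integral>f. real (card (edge12_witnesses n k f)) \<partial>M) - real (card D)"
    using expectation_card_edge12_witnesses_ge[OF n p, of k] card_D unfolding M_def by linarith
  also have "\<dots> = (\<integral>f. real (card (edge12_witnesses n k f)) - real (card D) \<partial>M)"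
    using int by (simp add: prob_space.prob_space[OF prob_space_measure_pmf])
  also have "\<dots> \<le> (\<integral>f. real (T_crit n k (f({1, 2} := False))) - real (T_crit n k (f({1, 2} := True))) \<partial>M)"
  proof (rule integral_mono[OF int int])
    fix f :: "nat set \<Rightarrow> bool"
    have "real (T_crit n k (f({1, 2} := True)) + card (edge12_witnesses n k f))
            \<le> real (T_crit n k (f({1, 2} := False)) + card D)"
      unfolding D_def by (rule of_nat_mono[OF T_crit_delete_edge12_ge[OF k]])
    then show "real (card (edge12_witnesses n k f)) - real (card D)
                 \<le> real (T_crit n k (f({1, 2} := False))) - real (T_crit n k (f({1, 2} := True)))"
      by simp
  qed
  also have "\<dots> = (\<integral>f. real (T_crit n k (f({1, 2} := False))) \<partial>M)
                   - (\<integral>f. real (T_crit n k (f({1, 2} := True))) \<partial>M)"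
    using int by simp
  finally show ?thesis .
qed

lemma edge12_mem_edge_set: "2 \<le> n \<Longrightarrow> {1, 2} \<in> edge_set n"
  unfolding edge_set_def by (intro CollectI exI[of _ 1] exI[of _ 2]) auto

lemma variance_T_crit_ge:
  fixes p x :: real
  assumes k: "1 \<le> k" and n: "2 \<le> n" and p: "0 \<le> p" "p \<le> 1"
    and x: "0 \<le> x" "x \<le> real (n - 2 choose k) * p ^ ((k + 2)^2) - real n ^ (k - 1)"
  shows "p * (1 - p) * x\<^sup>2 \<le> measure_pmf.variance (Gnp n p) (\<lambda>Y. real (T_crit n k Y))"
proof -
  define M where "M = Pi_pmf (edge_set n - {{1, 2}}) False (\<lambda>_. bernoulli_pmf p)"
  define drop where "drop = (\<integral>f. real (T_crit n k (f({1, 2} := False))) \<partial>M)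
                            - (\<integral>f. real (T_crit n k (f({1, 2} := True))) \<partial>M)"
  have "x \<le> drop"
    using x(2) expectation_T_crit_delete_edge12_ge[OF k n p] unfolding drop_def M_def by linarith
  then have "p * (1 - p) * x\<^sup>2 \<le> p * (1 - p) * drop\<^sup>2"
    using x(1) p by (intro mult_left_mono power_mono) auto
  also have "\<dots> \<le> measure_pmf.variance (Gnp n p) (\<lambda>Y. real (T_crit n k Y))"
    using variance_Gnp_ge_edge_effect[OF edge12_mem_edge_set[OF n] p, of "\<lambda>Y. real (T_crit n k Y)"]
    unfolding drop_def M_def by (simp add: power2_commute)
  finally show ?thesis .
qed

lemma binomial_minus_two_ge:
  assumes "1 \<le> k" and "4 \<le> n" and "k + 2 \<le> n"
  shows "(real n / (2 * real k)) ^ k \<le> real (n - 2 choose k)"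
proof -
  have "real n / (2 * real k) \<le> real (n - 2) / real k"
    using assms by (simp add: field_simps)
  then have "(real n / (2 * real k)) ^ k \<le> (real (n - 2) / real k) ^ k"
    by (rule power_mono) simp
  also have "\<dots> \<le> real (n - 2 choose k)"
    by (rule binomial_ge_n_over_k_pow_k) (use assms in simp)
  finally show ?thesis .
qed

lemma binomial_minus_two_dominates:
  fixes q :: real
  assumes q: "0 < q" and k: "1 \<le> k"
  shows "\<exists>c>0. \<exists>N. \<forall>n\<ge>N. c * real n ^ k \<le> real (n - 2 choose k) * q - real n ^ (k - 1)"
proof -
  define c where "c = q / (2 * real k) ^ k"
  have c: "0 < c" using q k unfolding c_def by simp
  define N where "N = max (k + 4) (nat \<lceil>2 / c\<rceil>)"
  have "c / 2 * real n ^ k \<le> real (n - 2 choose k) * q - real n ^ (k - 1)" if n: "N \<le> n" for n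
  proof -
    have "2 / c \<le> real n" using n unfolding N_def by linarith
    then have "2 \<le> c * real n" using c by (simp add: field_simps)
    then have "real n ^ (k - 1) * 2 \<le> real n ^ (k - 1) * (c * real n)" by (rule mult_left_mono) simp
    also have "\<dots> = c * real n ^ k" using k by (simp add: power_eq_if)
    finally have lower: "real n ^ (k - 1) \<le> c / 2 * real n ^ k" by simp
    have "c * real n ^ k = q * (real n / (2 * real k)) ^ k" unfolding c_def by (simp add: power_divide)
    also have "\<dots> \<le> q * real (n - 2 choose k)"
      using binomial_minus_two_ge[OF k] n q unfolding N_def by (intro mult_left_mono) auto
    finally show ?thesis using lower by (simp add: mult.commute)
  qed
  then show ?thesis using c by (intro exI[of _ "c / 2"] exI[of _ N]) auto
qed

theorem lemma4p4:
  fixes k :: nat and p :: real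
  assumes "k \<ge> 1" and "0 < p" and "p < 1"
  shows "\<exists>C > 0. \<exists>N :: nat. \<forall>n \<ge> N.
           measure_pmf.variance (Gnp n p) (\<lambda>Y. real (T_crit n k Y)) \<ge> C * real n ^ (2 * k)"
proof -
  obtain c N where c: "0 < c"
    and dominates: "\<forall>n\<ge>N. c * real n ^ k \<le> real (n - 2 choose k) * p ^ ((k + 2)^2) - real n ^ (k - 1)"
    using binomial_minus_two_dominates[of "p ^ ((k + 2)^2)" k] assms by auto
  have "p * (1 - p) * c\<^sup>2 * real n ^ (2 * k) \<le> measure_pmf.variance (Gnp n p) (\<lambda>Y. real (T_crit n k Y))"
    if n: "max N 2 \<le> n" for n
  proof -
    have "p * (1 - p) * (c * real n ^ k)\<^sup>2 \<le> measure_pmf.variance (Gnp n p) (\<lambda>Y. real (T_crit n k Y))"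
      using n c assms dominates by (intro variance_T_crit_ge) auto
    moreover have "(c * real n ^ k)\<^sup>2 = c\<^sup>2 * real n ^ (2 * k)"
      by (simp add: power_mult_distrib power_mult[symmetric] mult.commute)
    ultimately show ?thesis by (simp add: mult.assoc)
  qed
  moreover have "0 < p * (1 - p) * c\<^sup>2" using assms c by simp
  ultimately show ?thesis by blast
qed

end
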